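(* Let $M$ be an endo-AIP right $R$-module and $S=\mathrm{End}_R(M)$. If $S$ is a local ring, then $S$ is a prime ring.
   Context: For $N\le M$, $l_S(N)=\{\phi\in S:\phi(N)=0\}$. An ideal $I$ of $S$ is right s-unital if for every $a\in I$ there is $x\in I$ with $ax=a$. $M$ is endo-AIP if $l_S(N)$ is a right s-unital ideal of $S$ for every fully invariant submodule $N$ of $M$. *)

theory Defs
  imports "HOL-Algebra.Algebra"
begin

text \<open>A right R-module: an abelian group M (additive part of a ring record) with a
  right scalar action act :: 'm => 'r => 'm, written act x r = x r.\<close>

definition right_module ::
  "('r, 'a) ring_scheme \<Rightarrow> ('m, 'b) ring_scheme \<Rightarrow> ('m \<Rightarrow> 'r \<Rightarrow> 'm) \<Rightarrow> bool" where
  "right_module R M act \<longleftrightarrow> ring R \<and> abelian_group M \<and>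
     (\<forall>x\<in>carrier M. \<forall>r\<in>carrier R. act x r \<in> carrier M) \<and>
     (\<forall>x\<in>carrier M. \<forall>y\<in>carrier M. \<forall>r\<in>carrier R.
        act (x \<oplus>\<^bsub>M\<^esub> y) r = act x r \<oplus>\<^bsub>M\<^esub> act y r) \<and>
     (\<forall>x\<in>carrier M. \<forall>r\<in>carrier R. \<forall>s\<in>carrier R.
        act x (r \<oplus>\<^bsub>R\<^esub> s) = act x r \<oplus>\<^bsub>M\<^esub> act x s) \<and>
     (\<forall>x\<in>carrier M. \<forall>r\<in>carrier R. \<forall>s\<in>carrier R.
        act x (r \<otimes>\<^bsub>R\<^esub> s) = act (act x r) s) \<and>
     (\<forall>x\<in>carrier M. act x \<one>\<^bsub>R\<^esub> = x)"

definition module_endos ::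
  "('r, 'a) ring_scheme \<Rightarrow> ('m, 'b) ring_scheme \<Rightarrow> ('m \<Rightarrow> 'r \<Rightarrow> 'm) \<Rightarrow> ('m \<Rightarrow> 'm) set" where
  "module_endos R M act = {f. f \<in> carrier M \<rightarrow> carrier M \<and> f \<in> extensional (carrier M) \<and>
     (\<forall>x\<in>carrier M. \<forall>y\<in>carrier M. f (x \<oplus>\<^bsub>M\<^esub> y) = f x \<oplus>\<^bsub>M\<^esub> f y) \<and>
     (\<forall>x\<in>carrier M. \<forall>r\<in>carrier R. f (act x r) = act (f x) r)}"

definition End_ring ::
  "('r, 'a) ring_scheme \<Rightarrow> ('m, 'b) ring_scheme \<Rightarrow> ('m \<Rightarrow> 'r \<Rightarrow> 'm) \<Rightarrow> ('m \<Rightarrow> 'm) ring" where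
  "End_ring R M act =
     \<lparr> carrier = module_endos R M act,
       Group.monoid.mult = (\<lambda>f g. \<lambda>x\<in>carrier M. f (g x)),
       Group.monoid.one = (\<lambda>x\<in>carrier M. x),
       Ring.ring.zero = (\<lambda>x\<in>carrier M. \<zero>\<^bsub>M\<^esub>),
       Ring.ring.add = (\<lambda>f g. \<lambda>x\<in>carrier M. f x \<oplus>\<^bsub>M\<^esub> g x) \<rparr>"

definition submodule ::
  "('r, 'a) ring_scheme \<Rightarrow> ('m, 'b) ring_scheme \<Rightarrow> ('m \<Rightarrow> 'r \<Rightarrow> 'm) \<Rightarrow> 'm set \<Rightarrow> bool" where
  "submodule R M act N \<longleftrightarrow> additive_subgroup N M \<and>
     (\<forall>x\<in>N. \<forall>r\<in>carrier R. act x r \<in> N)"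

definition fully_invariant ::
  "('r, 'a) ring_scheme \<Rightarrow> ('m, 'b) ring_scheme \<Rightarrow> ('m \<Rightarrow> 'r \<Rightarrow> 'm) \<Rightarrow> 'm set \<Rightarrow> bool" where
  "fully_invariant R M act N \<longleftrightarrow> submodule R M act N \<and>
     (\<forall>f\<in>module_endos R M act. f ` N \<subseteq> N)"

definition left_annihilator ::
  "('r, 'a) ring_scheme \<Rightarrow> ('m, 'b) ring_scheme \<Rightarrow> ('m \<Rightarrow> 'r \<Rightarrow> 'm) \<Rightarrow> 'm set \<Rightarrow> ('m \<Rightarrow> 'm) set" where
  "left_annihilator R M act N = {f \<in> module_endos R M act. \<forall>x\<in>N. f x = \<zero>\<^bsub>M\<^esub>}"

definition right_s_unital_ideal :: "'c set \<Rightarrow> ('c, 'd) ring_scheme \<Rightarrow> bool" where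
  "right_s_unital_ideal I S \<longleftrightarrow> ideal I S \<and> (\<forall>a\<in>I. \<exists>x\<in>I. a \<otimes>\<^bsub>S\<^esub> x = a)"

definition endo_AIP ::
  "('r, 'a) ring_scheme \<Rightarrow> ('m, 'b) ring_scheme \<Rightarrow> ('m \<Rightarrow> 'r \<Rightarrow> 'm) \<Rightarrow> bool" where
  "endo_AIP R M act \<longleftrightarrow> (\<forall>N. fully_invariant R M act N \<longrightarrow>
     right_s_unital_ideal (left_annihilator R M act N) (End_ring R M act))"

text \<open>A local ring: a ring whose non-units form an ideal (equivalently, a unique
  maximal one-sided ideal); this forces 1 \<noteq> 0.\<close>

definition local_ring :: "('c, 'd) ring_scheme \<Rightarrow> bool" where
  "local_ring S \<longleftrightarrow> ring S \<and> ideal (carrier S - Units S) S"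

definition prime_ring :: "('c, 'd) ring_scheme \<Rightarrow> bool" where
  "prime_ring S \<longleftrightarrow> ring S \<and> \<one>\<^bsub>S\<^esub> \<noteq> \<zero>\<^bsub>S\<^esub> \<and>
     (\<forall>a\<in>carrier S. \<forall>b\<in>carrier S.
        (\<forall>s\<in>carrier S. a \<otimes>\<^bsub>S\<^esub> s \<otimes>\<^bsub>S\<^esub> b = \<zero>\<^bsub>S\<^esub>) \<longrightarrow>
        a = \<zero>\<^bsub>S\<^esub> \<or> b = \<zero>\<^bsub>S\<^esub>)"

end

theory Submission
  imports Defs
begin

text \<open>Let \<open>a S b = 0\<close>. The elements of \<open>M\<close> killed by the right ideal \<open>a S\<close> form a fully
  invariant submodule \<open>N\<close> containing \<open>b M\<close>, and \<open>a \<in> l\<^sub>S(N)\<close>. Right s-unitality of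
  \<open>l\<^sub>S(N)\<close> yields \<open>x\<close> with \<open>a x = a\<close> and \<open>x N = 0\<close>, hence \<open>x b = 0\<close>. In the local ring \<open>S\<close>
  either \<open>x\<close> is a unit, forcing \<open>b = 0\<close>, or \<open>1 - x\<close> is, and then \<open>a (1 - x) = 0\<close>
  forces \<open>a = 0\<close>.\<close>

lemma local_ring_nonunits_add_closed:
  assumes "local_ring S" "x \<in> carrier S - Units S" "y \<in> carrier S - Units S"
  shows "x \<oplus>\<^bsub>S\<^esub> y \<in> carrier S - Units S"
proof -
  have "ideal (carrier S - Units S) S" using assms(1) unfolding local_ring_def by blast
  then show ?thesis using assms(2,3) by (rule additive_subgroup.a_closed[OF ideal.axioms(1)])
qed

lemma local_ring_one_neq_zero:
  assumes "local_ring S"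
  shows "\<one>\<^bsub>S\<^esub> \<noteq> \<zero>\<^bsub>S\<^esub>"
proof
  assume "\<one>\<^bsub>S\<^esub> = \<zero>\<^bsub>S\<^esub>"
  moreover have "\<zero>\<^bsub>S\<^esub> \<in> carrier S - Units S"
    using assms unfolding local_ring_def by (metis additive_subgroup.zero_closed ideal.axioms(1))
  moreover have "\<one>\<^bsub>S\<^esub> \<in> Units S"
    using assms monoid.Units_one_closed[OF ring.is_monoid] unfolding local_ring_def by blast
  ultimately show False by simp
qed

lemma local_ring_Units_or_one_minus_Units:
  assumes "local_ring S" and x: "x \<in> carrier S"
  shows "x \<in> Units S \<or> \<one>\<^bsub>S\<^esub> \<ominus>\<^bsub>S\<^esub> x \<in> Units S"
proof (rule ccontr)
  interpret ring S using assms(1) unfolding local_ring_def by blast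
  assume "\<not> (x \<in> Units S \<or> \<one>\<^bsub>S\<^esub> \<ominus>\<^bsub>S\<^esub> x \<in> Units S)"
  then have "x \<oplus>\<^bsub>S\<^esub> (\<one>\<^bsub>S\<^esub> \<ominus>\<^bsub>S\<^esub> x) \<in> carrier S - Units S"
    using assms(1) x by (intro local_ring_nonunits_add_closed) auto
  moreover have "x \<oplus>\<^bsub>S\<^esub> (\<one>\<^bsub>S\<^esub> \<ominus>\<^bsub>S\<^esub> x) = \<one>\<^bsub>S\<^esub>"
    using x by (simp add: minus_eq a_lcomm[of x] r_neg)
  ultimately show False by simp
qed

lemma local_ring_right_unit_zero_divisor:
  assumes "local_ring S"
    and a: "a \<in> carrier S" and b: "b \<in> carrier S" and x: "x \<in> carrier S"
    and ax: "a \<otimes>\<^bsub>S\<^esub> x = a" and xb: "x \<otimes>\<^bsub>S\<^esub> b = \<zero>\<^bsub>S\<^esub>"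
  shows "a = \<zero>\<^bsub>S\<^esub> \<or> b = \<zero>\<^bsub>S\<^esub>"
  using local_ring_Units_or_one_minus_Units[OF assms(1) x]
proof
  interpret ring S using assms(1) unfolding local_ring_def by blast
  assume "x \<in> Units S"
  then have "b = inv\<^bsub>S\<^esub> x \<otimes>\<^bsub>S\<^esub> (x \<otimes>\<^bsub>S\<^esub> b)"
    using b x by (simp add: m_assoc[symmetric] Units_l_inv)
  then show ?thesis using xb \<open>x \<in> Units S\<close> by simp
next
  interpret ring S using assms(1) unfolding local_ring_def by blast
  assume unit: "\<one>\<^bsub>S\<^esub> \<ominus>\<^bsub>S\<^esub> x \<in> Units S"
  then have "a = a \<otimes>\<^bsub>S\<^esub> ((\<one>\<^bsub>S\<^esub> \<ominus>\<^bsub>S\<^esub> x) \<otimes>\<^bsub>S\<^esub> inv\<^bsub>S\<^esub> (\<one>\<^bsub>S\<^esub> \<ominus>\<^bsub>S\<^esub> x))"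
    using a by simp
  also have "\<dots> = a \<otimes>\<^bsub>S\<^esub> (\<one>\<^bsub>S\<^esub> \<ominus>\<^bsub>S\<^esub> x) \<otimes>\<^bsub>S\<^esub> inv\<^bsub>S\<^esub> (\<one>\<^bsub>S\<^esub> \<ominus>\<^bsub>S\<^esub> x)"
    using a x unit by (simp add: m_assoc)
  also have "a \<otimes>\<^bsub>S\<^esub> (\<one>\<^bsub>S\<^esub> \<ominus>\<^bsub>S\<^esub> x) = \<zero>\<^bsub>S\<^esub>"
    using a x ax by (simp add: r_distr minus_eq r_minus r_neg)
  finally show ?thesis using unit by simp
qed

lemma module_endos_abelian_group_hom:
  assumes "abelian_group M" "f \<in> module_endos R M act"
  shows "abelian_group_hom M M f"
  using assms by (intro abelian_group_homI group_hom.intro group_hom_axioms.intro)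
    (auto simp: abelian_group.a_group module_endos_def hom_def)

lemma right_module_act_zero:
  assumes "right_module R M act" "r \<in> carrier R"
  shows "act \<zero>\<^bsub>M\<^esub> r = \<zero>\<^bsub>M\<^esub>"
proof -
  have "abelian_group_hom M M (\<lambda>x. act x r)"
    using assms unfolding right_module_def
    by (intro abelian_group_homI group_hom.intro group_hom_axioms.intro)
      (auto simp: abelian_group.a_group hom_def)
  then show ?thesis by (rule abelian_group_hom.hom_zero)
qed

lemma End_ring_carrier [simp]: "carrier (End_ring R M act) = module_endos R M act"
  by (simp add: End_ring_def)

lemma End_ring_mult_apply:
  "y \<in> carrier M \<Longrightarrow> (f \<otimes>\<^bsub>End_ring R M act\<^esub> g) y = f (g y)"
  by (simp add: End_ring_def)

lemma End_ring_zero_apply: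
  "y \<in> carrier M \<Longrightarrow> \<zero>\<^bsub>End_ring R M act\<^esub> y = \<zero>\<^bsub>M\<^esub>"
  by (simp add: End_ring_def)

lemma End_ring_eq_zeroI:
  assumes "f \<in> module_endos R M act" "\<And>y. y \<in> carrier M \<Longrightarrow> f y = \<zero>\<^bsub>M\<^esub>"
  shows "f = \<zero>\<^bsub>End_ring R M act\<^esub>"
  using assms by (auto simp: End_ring_def module_endos_def extensional_def)

definition module_annihilator :: "('m, 'b) ring_scheme \<Rightarrow> ('m \<Rightarrow> 'm) set \<Rightarrow> 'm set" where
  "module_annihilator M A = {y \<in> carrier M. \<forall>f\<in>A. f y = \<zero>\<^bsub>M\<^esub>}"

lemma submodule_module_annihilator:
  assumes "right_module R M act" "A \<subseteq> module_endos R M act"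
  shows "submodule R M act (module_annihilator M A)"
proof -
  interpret abelian_group M using assms(1) unfolding right_module_def by blast
  have hom: "abelian_group_hom M M f" if "f \<in> A" for f
    using module_endos_abelian_group_hom that assms(2) abelian_group_axioms by blast
  have zero: "\<zero>\<^bsub>M\<^esub> \<in> module_annihilator M A"
    using hom abelian_group_hom.hom_zero unfolding module_annihilator_def by blast
  have closed: "\<ominus>\<^bsub>M\<^esub> y \<in> module_annihilator M A \<and> y \<oplus>\<^bsub>M\<^esub> z \<in> module_annihilator M A"
    if "y \<in> module_annihilator M A" "z \<in> module_annihilator M A" for y z
  proof -
    have y: "y \<in> carrier M" "\<forall>f\<in>A. f y = \<zero>\<^bsub>M\<^esub>" and z: "z \<in> carrier M" "\<forall>f\<in>A. f z = \<zero>\<^bsub>M\<^esub>"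
      using that unfolding module_annihilator_def by auto
    have "f (\<ominus>\<^bsub>M\<^esub> y) = \<zero>\<^bsub>M\<^esub> \<and> f (y \<oplus>\<^bsub>M\<^esub> z) = \<zero>\<^bsub>M\<^esub>" if f: "f \<in> A" for f
    proof -
      interpret abelian_group_hom M M f using hom[OF f] .
      have "f y = \<zero>\<^bsub>M\<^esub>" "f z = \<zero>\<^bsub>M\<^esub>" using y z f by auto
      then show ?thesis using y z by simp
    qed
    then show ?thesis
      using y(1) z(1) a_inv_closed a_closed unfolding module_annihilator_def by blast
  qed
  have "subgroup (module_annihilator M A) (add_monoid M)"
  proof (rule add.subgroupI)
    show "\<ominus>\<^bsub>M\<^esub> y \<in> module_annihilator M A" if "y \<in> module_annihilator M A" for y
      using closed[OF that that] by blast
    show "y \<oplus>\<^bsub>M\<^esub> z \<in> module_annihilator M A"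
      if "y \<in> module_annihilator M A" "z \<in> module_annihilator M A" for y z
      using closed[OF that] by blast
  qed (use zero in \<open>auto simp: module_annihilator_def\<close>)
  moreover have "act y r \<in> module_annihilator M A"
    if y: "y \<in> module_annihilator M A" and r: "r \<in> carrier R" for y r
  proof -
    have "f (act y r) = act (f y) r" if "f \<in> A" for f
      using that y r assms(2) unfolding module_annihilator_def module_endos_def by blast
    moreover have "act y r \<in> carrier M"
      using assms(1) y r unfolding module_annihilator_def right_module_def by blast
    ultimately show ?thesis
      using y r right_module_act_zero[OF assms(1) r] unfolding module_annihilator_def by auto
  qed
  ultimately show ?thesis
    unfolding submodule_def by (auto intro: additive_subgroupI)
qed

lemma fully_invariant_module_annihilator:
  assumes "right_module R M act" "A \<subseteq> module_endos R M act"
    and right_closed: "\<And>f s. f \<in> A \<Longrightarrow> s \<in> module_endos R M act \<Longrightarrow> f \<otimes>\<^bsub>End_ring R M act\<^esub> s \<in> A"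
  shows "fully_invariant R M act (module_annihilator M A)"
  unfolding fully_invariant_def
proof (intro conjI ballI subsetI)
  show "submodule R M act (module_annihilator M A)"
    using assms(1,2) by (rule submodule_module_annihilator)
  fix s z assume s: "s \<in> module_endos R M act" and "z \<in> s ` module_annihilator M A"
  then obtain y where y: "y \<in> module_annihilator M A" and z: "z = s y" by blast
  have "f (s y) = \<zero>\<^bsub>M\<^esub>" if "f \<in> A" for f
  proof -
    have "(f \<otimes>\<^bsub>End_ring R M act\<^esub> s) y = \<zero>\<^bsub>M\<^esub>"
      using right_closed[OF that s] y unfolding module_annihilator_def by blast
    then show ?thesis
      using y unfolding module_annihilator_def by (simp add: End_ring_mult_apply)
  qed
  then show "z \<in> module_annihilator M A"
    using s y z unfolding module_annihilator_def module_endos_def by auto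
qed

lemma endo_AIP_right_unit_annihilating:
  fixes R :: "('r, 'a) ring_scheme" and M :: "('m, 'b) ring_scheme" and act :: "'m \<Rightarrow> 'r \<Rightarrow> 'm"
  defines S: "S \<equiv> End_ring R M act"
  assumes module: "right_module R M act" and AIP: "endo_AIP R M act" and "ring S"
    and a: "a \<in> carrier S" and b: "b \<in> carrier S"
    and aSb: "\<forall>s\<in>carrier S. a \<otimes>\<^bsub>S\<^esub> s \<otimes>\<^bsub>S\<^esub> b = \<zero>\<^bsub>S\<^esub>"
  shows "\<exists>x\<in>carrier S. a \<otimes>\<^bsub>S\<^esub> x = a \<and> x \<otimes>\<^bsub>S\<^esub> b = \<zero>\<^bsub>S\<^esub>"
proof -
  interpret ring S by fact
  have carrier_S: "module_endos R M act = carrier S" by (simp add: S)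
  define aS where "aS = (\<lambda>s. a \<otimes>\<^bsub>S\<^esub> s) ` carrier S"
  define N where "N = module_annihilator M aS"
  have "fully_invariant R M act N"
    unfolding N_def
  proof (rule fully_invariant_module_annihilator[OF module])
    show "aS \<subseteq> module_endos R M act" using a unfolding aS_def carrier_S by auto
    show "f \<otimes>\<^bsub>End_ring R M act\<^esub> t \<in> aS" if "f \<in> aS" "t \<in> module_endos R M act" for f t
      using that a unfolding aS_def S[symmetric] carrier_S by (auto simp: m_assoc)
  qed
  then have s_unital: "right_s_unital_ideal (left_annihilator R M act N) S"
    using AIP unfolding endo_AIP_def S by blast
  have "a \<in> aS" using a unfolding aS_def by (metis image_eqI one_closed r_one)
  then have "a \<in> left_annihilator R M act N"
    using a unfolding left_annihilator_def N_def module_annihilator_def S by auto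
  then obtain x where x: "x \<in> left_annihilator R M act N" and ax: "a \<otimes>\<^bsub>S\<^esub> x = a"
    using s_unital unfolding right_s_unital_ideal_def by blast
  have b_N: "b y \<in> N" if y: "y \<in> carrier M" for y
  proof -
    have "(a \<otimes>\<^bsub>S\<^esub> s) (b y) = \<zero>\<^bsub>M\<^esub>" if "s \<in> carrier S" for s
      using aSb that y by (metis S End_ring_mult_apply End_ring_zero_apply)
    moreover have "b y \<in> carrier M" using b y unfolding carrier_S[symmetric] module_endos_def by auto
    ultimately show ?thesis unfolding N_def module_annihilator_def aS_def by auto
  qed
  have x_carrier: "x \<in> carrier S"
    using x unfolding carrier_S[symmetric] left_annihilator_def by auto
  have xb: "x \<otimes>\<^bsub>S\<^esub> b = \<zero>\<^bsub>S\<^esub>"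
    unfolding S
  proof (rule End_ring_eq_zeroI)
    show "x \<otimes>\<^bsub>End_ring R M act\<^esub> b \<in> module_endos R M act"
      using x_carrier b unfolding carrier_S S[symmetric] by simp
    show "(x \<otimes>\<^bsub>End_ring R M act\<^esub> b) y = \<zero>\<^bsub>M\<^esub>" if "y \<in> carrier M" for y
      using x b_N[OF that] that unfolding left_annihilator_def by (simp add: End_ring_mult_apply)
  qed
  show ?thesis using x_carrier ax xb by (intro bexI conjI)
qed

theorem proposition3p9:
  fixes R :: "('r, 'a) ring_scheme" and M :: "('m, 'b) ring_scheme"
    and act :: "'m \<Rightarrow> 'r \<Rightarrow> 'm"
  assumes "right_module R M act"
    and "endo_AIP R M act"
    and "local_ring (End_ring R M act)"
  shows "prime_ring (End_ring R M act)"
  unfolding prime_ring_def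
proof (intro conjI ballI impI)
  let ?S = "End_ring R M act"
  show ring: "ring ?S" using assms(3) unfolding local_ring_def by blast
  show "\<one>\<^bsub>?S\<^esub> \<noteq> \<zero>\<^bsub>?S\<^esub>" using assms(3) by (rule local_ring_one_neq_zero)
  fix a b assume a: "a \<in> carrier ?S" and b: "b \<in> carrier ?S"
    and "\<forall>s\<in>carrier ?S. a \<otimes>\<^bsub>?S\<^esub> s \<otimes>\<^bsub>?S\<^esub> b = \<zero>\<^bsub>?S\<^esub>"
  then obtain x where "x \<in> carrier ?S" "a \<otimes>\<^bsub>?S\<^esub> x = a" "x \<otimes>\<^bsub>?S\<^esub> b = \<zero>\<^bsub>?S\<^esub>"
    using endo_AIP_right_unit_annihilating[OF assms(1,2) ring] by blast
  then show "a = \<zero>\<^bsub>?S\<^esub> \<or> b = \<zero>\<^bsub>?S\<^esub>"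
    by (rule local_ring_right_unit_zero_divisor[OF assms(3) a b])
qed

end
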